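(* Let $\epsilon>0$, $\rho\ge 1+\epsilon$, $S\ge 0$, and let $\beta_1, \dots, \beta_k$ be nonnegative reals such that $1+\epsilon \leq \beta_i \leq \rho$ for all $i$ and $\sum_{i=1}^k \beta_i \geq S$. Then \[ \prod_{i=1}^k \beta_i \geq \min\left\{ \rho^{S/{\rho}},\ (1+\epsilon)^{S/{(1+\epsilon)}} \right\}. \] *)

theory Defs
  imports Complex_Main
begin

end

theory Submission
  imports Defs
begin

(* Taking logarithms, the product is at least exp (m S) for any m \<ge> 0 bounding ln \<beta>_i / \<beta>_i from
   below. The function ln x / x increases up to e and decreases afterwards, so on [1 + \<epsilon>, \<rho>] its
   minimum is attained at an endpoint, which gives the two terms of the minimum. *)

lemma ln_x_over_x_mono_le_exp1:
  fixes x y :: real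
  assumes "0 < x" "x \<le> y" "y \<le> exp 1"
  shows "ln x / x \<le> ln y / y"
proof -
  have deriv: "((\<lambda>t. ln t / t) has_real_derivative (1 - ln t) / t\<^sup>2) (at t)"
    if "x \<le> t" for t :: real
    using that assms(1) by (auto intro!: derivative_eq_intros simp: field_simps power2_eq_square)
  have "0 \<le> (1 - ln t) / t\<^sup>2" if "x \<le> t" "t \<le> y" for t :: real
  proof -
    have "ln t \<le> ln (exp 1)"
      using that assms by (subst ln_le_cancel_iff) auto
    then show ?thesis by simp
  qed
  with deriv show ?thesis
    using DERIV_nonneg_imp_nondecreasing[of x y "\<lambda>t. ln t / t"] assms(2) by blast
qed

lemma ln_x_over_x_ge_min:
  fixes a b x :: real
  assumes "0 < a" "a \<le> x" "x \<le> b"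
  shows "min (ln a / a) (ln b / b) \<le> ln x / x"
proof (cases "x \<le> exp 1")
  case True
  then show ?thesis using ln_x_over_x_mono_le_exp1[OF assms(1,2)] by simp
next
  case False
  then show ?thesis using ln_x_over_x_mono[of x b] assms(3) by simp
qed

lemma exp_le_prod_if_ln_div_ge:
  fixes \<beta> :: "'a \<Rightarrow> real" and m S :: real
  assumes "finite A"
    and pos: "\<And>i. i \<in> A \<Longrightarrow> 0 < \<beta> i"
    and bound: "\<And>i. i \<in> A \<Longrightarrow> m \<le> ln (\<beta> i) / \<beta> i"
    and "0 \<le> m" "S \<le> sum \<beta> A"
  shows "exp (m * S) \<le> prod \<beta> A"
proof -
  have "m * S \<le> (\<Sum>i\<in>A. m * \<beta> i)"
    using mult_left_mono[OF assms(5,4)] by (simp add: sum_distrib_left)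
  also have "\<dots> \<le> (\<Sum>i\<in>A. ln (\<beta> i))"
    using bound pos by (intro sum_mono) (simp add: pos_le_divide_eq)
  also have "\<dots> = ln (prod \<beta> A)"
    using pos by (intro ln_prod[symmetric, OF \<open>finite A\<close>]) (metis less_irrefl)
  finally show ?thesis
    using pos prod_pos[of A \<beta>] by (metis exp_le_cancel_iff exp_ln)
qed

lemma min_powr_self_div_eq_exp:
  fixes a b S :: real
  assumes "0 < a" "0 < b" "0 \<le> S"
  shows "min (a powr (S / a)) (b powr (S / b)) = exp (min (ln a / a) (ln b / b) * S)"
proof -
  have "mono (\<lambda>u. exp (u * S))"
    using \<open>0 \<le> S\<close> by (intro monoI) (simp add: mult_right_mono)
  then have "min (exp (ln a / a * S)) (exp (ln b / b * S)) = exp (min (ln a / a) (ln b / b) * S)"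
    by (rule min_of_mono)
  then show ?thesis
    using assms(1,2) by (simp add: powr_def mult.commute)
qed

theorem lemmaA1:
  fixes \<epsilon> \<rho> S :: real and k :: nat and \<beta> :: "nat \<Rightarrow> real"
  assumes "\<epsilon> > 0"
    and "\<rho> \<ge> 1 + \<epsilon>"
    and "S \<ge> 0"
    and "\<And>i. i \<in> {1..k} \<Longrightarrow> \<beta> i \<ge> 0"
    and "\<And>i. i \<in> {1..k} \<Longrightarrow> 1 + \<epsilon> \<le> \<beta> i \<and> \<beta> i \<le> \<rho>"
    and "(\<Sum>i=1..k. \<beta> i) \<ge> S"
  shows "(\<Prod>i=1..k. \<beta> i) \<ge> min (\<rho> powr (S / \<rho>)) ((1 + \<epsilon>) powr (S / (1 + \<epsilon>)))"
proof -
  define m where "m = min (ln \<rho> / \<rho>) (ln (1 + \<epsilon>) / (1 + \<epsilon>))"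
  have "0 \<le> m"
    using assms(1,2) by (simp add: m_def)
  have pos: "\<And>i. i \<in> {1..k} \<Longrightarrow> 0 < \<beta> i"
    using assms(1,5) by force
  have "\<And>i. i \<in> {1..k} \<Longrightarrow> m \<le> ln (\<beta> i) / \<beta> i"
    using ln_x_over_x_ge_min assms(1,5) unfolding m_def by (metis add_pos_pos min.commute zero_less_one)
  then have "exp (m * S) \<le> (\<Prod>i=1..k. \<beta> i)"
    using exp_le_prod_if_ln_div_ge[of "{1..k}" \<beta> m S] pos \<open>0 \<le> m\<close> assms(6) by blast
  moreover have "min (\<rho> powr (S / \<rho>)) ((1 + \<epsilon>) powr (S / (1 + \<epsilon>))) = exp (m * S)"
    unfolding m_def using assms(1-3) by (intro min_powr_self_div_eq_exp) auto
  ultimately show ?thesis by simp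
qed

end
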